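(* Let $W$ be a well generated complex reflection group, $g\in W$ a parabolic quasi-Coxeter element and $W_g$ its parabolic closure. Then $\mathrm{RGS}(W,g)=\mathrm{RGS}(W,W_g)$.
   Context: $W\le\mathrm{GL}(V)$ is a finite group generated by unitary reflections, of rank $n=\operatorname{codim}V^W$, and well generated (generated by $n$ reflections). A good generating set of a reflection group $G$ is a set of $\operatorname{rank}(G)$ reflections generating $G$. Parabolic subgroups are pointwise stabilizers of subsets of $V$; $W_g$ is the smallest parabolic subgroup containing $g$. $\ell_R$ is reflection length. $g$ is parabolic quasi-Coxeter if some reduced reflection factorization of $g$ has factors forming a good generating set for a parabolic subgroup. For a reflection subgroup $W'$ of rank $k$, $\mathrm{RGS}(W,W')$ is the set of sets $\{t_1,\dots,t_{n-k}\}$ of $n-k$ reflections with $\langle W',t_1,\dots,t_{n-k}\rangle=W$. For $g$ with $\ell_R(g)=k$, $\mathrm{RGS}(W,g)$ is the set of sets $\{t_1,\dots,t_{n-k}\}$ of $n-k$ reflections for which there exists a reduced reflection factorization $g=t_{n-k+1}\cdots t_n$ such that $\{t_1,\dots,t_n\}$ generates $W$. *)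

theory Defs
  imports "HOL-Analysis.Analysis"
begin

text \<open>The ambient space is V = complex^'n; linear maps are matrices complex^'n^'n.
  Dimensions are complex dimensions (vec.dim, the vector space over the scalar field).\<close>

type_synonym 'n cmat = "complex^'n^'n"

inductive_set gen :: "'n::finite cmat set \<Rightarrow> 'n cmat set" for S where
  gen_one: "mat 1 \<in> gen S"
| gen_elt: "s \<in> S \<Longrightarrow> s \<in> gen S"
| gen_inv: "s \<in> S \<Longrightarrow> matrix_inv s \<in> gen S"
| gen_mult: "a \<in> gen S \<Longrightarrow> b \<in> gen S \<Longrightarrow> a ** b \<in> gen S"

definition fixspace :: "'n::finite cmat set \<Rightarrow> (complex^'n) set" where
  "fixspace G = {v. \<forall>w\<in>G. w *v v = v}"

definition grank :: "'n::finite cmat set \<Rightarrow> nat" where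
  "grank G = CARD('n) - vec.dim (fixspace G)"

definition is_reflection :: "'n::finite cmat \<Rightarrow> bool" where
  "is_reflection r \<longleftrightarrow> invertible r \<and> r \<noteq> mat 1 \<and>
     (\<exists>k>0. ((\<lambda>x. r ** x) ^^ k) (mat 1) = mat 1) \<and>
     vec.dim {v. r *v v = v} = CARD('n) - 1"

definition refls :: "'n::finite cmat set \<Rightarrow> 'n cmat set" where
  "refls W = {r \<in> W. is_reflection r}"

definition reflection_group :: "'n::finite cmat set \<Rightarrow> bool" where
  "reflection_group W \<longleftrightarrow> finite W \<and> (\<forall>w\<in>W. invertible w) \<and> W = gen (refls W)"

definition well_generated :: "'n::finite cmat set \<Rightarrow> bool" where
  "well_generated W \<longleftrightarrow> reflection_group W \<and>
     (\<exists>T. T \<subseteq> refls W \<and> finite T \<and> card T = grank W \<and> gen T = W)"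

definition mprod :: "'n::finite cmat list \<Rightarrow> 'n cmat" where
  "mprod ts = foldr (**) ts (mat 1)"

definition refl_length :: "'n::finite cmat set \<Rightarrow> 'n cmat \<Rightarrow> nat" where
  "refl_length W g = (LEAST k. \<exists>ts. length ts = k \<and> set ts \<subseteq> refls W \<and> mprod ts = g)"

definition reduced_refl_fact :: "'n::finite cmat set \<Rightarrow> 'n cmat \<Rightarrow> 'n cmat list \<Rightarrow> bool" where
  "reduced_refl_fact W g ts \<longleftrightarrow> set ts \<subseteq> refls W \<and> mprod ts = g \<and> length ts = refl_length W g"

definition pstab :: "'n::finite cmat set \<Rightarrow> (complex^'n) set \<Rightarrow> 'n cmat set" where
  "pstab W A = {w \<in> W. \<forall>v\<in>A. w *v v = v}"

definition parabolic :: "'n::finite cmat set \<Rightarrow> 'n cmat set \<Rightarrow> bool" where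
  "parabolic W P \<longleftrightarrow> (\<exists>A. P = pstab W A)"

definition pclosure :: "'n::finite cmat set \<Rightarrow> 'n cmat \<Rightarrow> 'n cmat set" where
  "pclosure W g = \<Inter>{P. parabolic W P \<and> g \<in> P}"

definition good_gen_set :: "'n::finite cmat set \<Rightarrow> 'n cmat set \<Rightarrow> bool" where
  "good_gen_set T G \<longleftrightarrow> finite T \<and> card T = grank G \<and> (\<forall>t\<in>T. is_reflection t) \<and> gen T = G"

definition parabolic_quasi_coxeter :: "'n::finite cmat set \<Rightarrow> 'n cmat \<Rightarrow> bool" where
  "parabolic_quasi_coxeter W g \<longleftrightarrow>
     (\<exists>ts P. reduced_refl_fact W g ts \<and> parabolic W P \<and> good_gen_set (set ts) P)"

definition RGS_sub :: "'n::finite cmat set \<Rightarrow> 'n cmat set \<Rightarrow> 'n cmat set set" where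
  "RGS_sub W W' = {T. finite T \<and> card T = grank W - grank W' \<and> T \<subseteq> refls W \<and>
                     gen (W' \<union> T) = W}"

definition RGS_elt :: "'n::finite cmat set \<Rightarrow> 'n cmat \<Rightarrow> 'n cmat set set" where
  "RGS_elt W g = {T. finite T \<and> card T = grank W - refl_length W g \<and> T \<subseteq> refls W \<and>
                    (\<exists>ts. reduced_refl_fact W g ts \<and> gen (T \<union> set ts) = W)}"

end

theory Submission
  imports Defs
begin

text \<open>Let g = t_1 \<cdots> t_k be a reduced reflection factorization whose factors form a good
  generating set of a parabolic subgroup P. Averaging over a finite group generated by reflections
  shows that the codimension of its fixed space is at most the dimension of the span of their
  roots; for the good generating set of P this forces the k roots to be linearly independent, and
  then (Carter's lemma) V^g is the common fixed space of the t_i, that is V^g = V^P. Hence P = W_g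
  and the reflection length of g is the rank of W_g. The same count shows that the factors of any
  reduced factorization of g fix V^g pointwise, so they lie in W_g. Consequently, for a set T of
  reflections, adjoining T to W_g or to the factors of a reduced factorization of g generates the
  same group.\<close>

lemma matrix_inv_right: "invertible (A::'a::semiring_1^'n::finite^'n) \<Longrightarrow> A ** matrix_inv A = mat 1"
  unfolding invertible_def matrix_inv_def by (rule someI2_ex) auto

lemma matrix_inv_left: "invertible (A::'a::semiring_1^'n::finite^'n) \<Longrightarrow> matrix_inv A ** A = mat 1"
  unfolding invertible_def matrix_inv_def by (rule someI2_ex) auto

lemma invertible_matrix_inv: "invertible (A::'a::semiring_1^'n::finite^'n) \<Longrightarrow> invertible (matrix_inv A)"
  by (meson invertible_def matrix_inv_left matrix_inv_right)

lemma matrix_inv_unique: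
  fixes A B :: "'a::semiring_1^'n::finite^'n"
  assumes "invertible A" "B ** A = mat 1"
  shows "matrix_inv A = B"
  by (metis assms matrix_inv_right matrix_mul_assoc matrix_mul_lid matrix_mul_rid)

lemma matrix_inv_matrix_inv: "invertible (A::'a::semiring_1^'n::finite^'n) \<Longrightarrow> matrix_inv (matrix_inv A) = A"
  by (simp add: invertible_matrix_inv matrix_inv_right matrix_inv_unique)

lemma matrix_inv_mult:
  fixes A B :: "'a::semiring_1^'n::finite^'n"
  assumes "invertible A" "invertible B"
  shows "matrix_inv (A ** B) = matrix_inv B ** matrix_inv A"
proof (rule matrix_inv_unique)
  show "invertible (A ** B)" using assms by (rule invertible_mult)
  have "matrix_inv B ** matrix_inv A ** (A ** B) = matrix_inv B ** (matrix_inv A ** A) ** B"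
    by (simp add: matrix_mul_assoc)
  then show "matrix_inv B ** matrix_inv A ** (A ** B) = mat 1"
    using assms by (simp add: matrix_inv_left)
qed

lemma matrix_inv_mat_1: "matrix_inv (mat 1 :: 'a::semiring_1^'n::finite^'n) = mat 1"
  by (rule matrix_inv_unique) (auto simp: invertible_def)

lemma gen_least:
  assumes "S \<subseteq> H" "mat 1 \<in> H" "\<And>s. s \<in> S \<Longrightarrow> matrix_inv s \<in> H"
    "\<And>a b. a \<in> H \<Longrightarrow> b \<in> H \<Longrightarrow> a ** b \<in> H"
  shows "gen S \<subseteq> H"
proof
  fix x assume "x \<in> gen S"
  then show "x \<in> H" by induction (use assms in auto)
qed

lemma gen_invertible_inv:
  assumes "\<And>s. s \<in> S \<Longrightarrow> invertible s" "x \<in> gen S"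
  shows "invertible x \<and> matrix_inv x \<in> gen S"
  using assms(2)
proof induction
  case gen_one
  show ?case by (simp add: matrix_inv_mat_1 gen.gen_one invertible_def)
next
  case (gen_elt s)
  then show ?case using assms(1) gen.gen_inv by blast
next
  case (gen_inv s)
  then show ?case using assms(1) invertible_matrix_inv matrix_inv_matrix_inv gen.gen_elt by metis
next
  case (gen_mult a b)
  then show ?case using invertible_mult matrix_inv_mult gen.gen_mult by metis
qed

lemma gen_subset_gen:
  assumes "\<And>s. s \<in> T \<Longrightarrow> invertible s" "S \<subseteq> gen T"
  shows "gen S \<subseteq> gen T"
  using assms gen_invertible_inv by (intro gen_least) (auto intro: gen.intros)

lemma gen_mono:
  assumes "\<And>s. s \<in> T \<Longrightarrow> invertible s" "S \<subseteq> T"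
  shows "gen S \<subseteq> gen T"
  using assms by (intro gen_subset_gen) (auto intro: gen.gen_elt)

lemma mprod_Nil [simp]: "mprod [] = mat 1"
  by (simp add: mprod_def)

lemma mprod_Cons [simp]: "mprod (x # xs) = x ** mprod xs"
  by (simp add: mprod_def)

lemma mprod_append [simp]: "mprod (xs @ ys) = mprod xs ** mprod ys"
  by (induction xs) (simp_all add: matrix_mul_assoc)

lemma mprod_in_gen: "set ts \<subseteq> S \<Longrightarrow> mprod ts \<in> gen S"
  by (induction ts) (auto intro: gen.intros)

lemma fixspace_gen:
  assumes "\<And>s. s \<in> S \<Longrightarrow> invertible s"
  shows "fixspace (gen S) = fixspace S"
proof
  show "fixspace (gen S) \<subseteq> fixspace S"
    unfolding fixspace_def using gen.gen_elt by blast
  show "fixspace S \<subseteq> fixspace (gen S)"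
  proof
    fix v assume v: "v \<in> fixspace S"
    have "gen S \<subseteq> {w. w *v v = v}"
    proof (rule gen_least)
      fix s assume s: "s \<in> S"
      have "matrix_inv s *v v = matrix_inv s *v (s *v v)"
        using v s by (simp add: fixspace_def)
      also have "\<dots> = v"
        using assms[OF s] by (simp add: matrix_vector_mul_assoc matrix_inv_left)
      finally show "matrix_inv s \<in> {w. w *v v = v}" by simp
    qed (use v in \<open>auto simp: fixspace_def simp flip: matrix_vector_mul_assoc\<close>)
    then show "v \<in> fixspace (gen S)" unfolding fixspace_def by blast
  qed
qed

lemma reflection_group_gen_subset:
  assumes "reflection_group W" "S \<subseteq> W"
  shows "gen S \<subseteq> W"
proof -
  have "\<And>s. s \<in> refls W \<Longrightarrow> invertible s" and "W = gen (refls W)"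
    using assms(1) unfolding reflection_group_def refls_def by auto
  then show ?thesis
    using assms(2) gen_subset_gen[of "refls W" S] gen.gen_elt[of _ "refls W"] by auto
qed

lemma reflection_group_one: "reflection_group W \<Longrightarrow> mat 1 \<in> W"
  using reflection_group_gen_subset[of W "{}"] gen.gen_one by blast

lemma reflection_group_mult: "reflection_group W \<Longrightarrow> a \<in> W \<Longrightarrow> b \<in> W \<Longrightarrow> a ** b \<in> W"
  using reflection_group_gen_subset[of W "{a, b}"] by (blast intro: gen.intros)

lemma reflection_group_matrix_inv: "reflection_group W \<Longrightarrow> a \<in> W \<Longrightarrow> matrix_inv a \<in> W"
  using reflection_group_gen_subset[of W "{a}"] gen.gen_inv by blast

definition fixed_vectors :: "'n::finite cmat \<Rightarrow> (complex^'n) set" where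
  "fixed_vectors A = {v. A *v v = v}"

lemma fixspace_singleton [simp]: "fixspace {A} = fixed_vectors A"
  by (simp add: fixspace_def fixed_vectors_def)

lemma subspace_fixspace: "vec.subspace (fixspace G)"
  unfolding vec.subspace_def fixspace_def by (simp add: vec.add vec.scale)

lemma subspace_fixed_vectors: "vec.subspace (fixed_vectors A)"
  using subspace_fixspace[of "{A}"] by simp

lemma fixed_vectors_eq_UNIV_iff: "fixed_vectors A = UNIV \<longleftrightarrow> A = mat 1"
  unfolding fixed_vectors_def by (auto simp: matrix_eq)

lemma full_dim_subspace_eq_UNIV:
  fixes S :: "(complex^'n::finite) set"
  assumes "vec.subspace S" "vec.dim S = CARD('n)"
  shows "S = UNIV"
  using vec.subspace_dim_equal[OF assms(1) vec.subspace_UNIV] assms(2)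
    vec_dim_card[where 'a=complex and 'n='n]
  by (metis order_refl subset_UNIV)

lemma reflection_root_exists:
  fixes t :: "'n::finite cmat"
  assumes "is_reflection t"
  shows "\<exists>a. a \<noteq> 0 \<and> (\<forall>v. \<exists>c. t *v v - v = c *s a)"
proof -
  have dim: "vec.dim (fixed_vectors t) = CARD('n) - 1"
    using assms unfolding is_reflection_def fixed_vectors_def by simp
  obtain u where u: "u \<notin> fixed_vectors t"
    using assms fixed_vectors_eq_UNIV_iff unfolding is_reflection_def by blast
  have span_fix: "vec.span (fixed_vectors t) = fixed_vectors t"
    using subspace_fixed_vectors by simp
  have "vec.dim (insert u (fixed_vectors t)) = CARD('n)"
    using u dim vec.dim_insert[of u "fixed_vectors t"] span_fix by simp
  then have "vec.span (insert u (fixed_vectors t)) = UNIV"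
    using full_dim_subspace_eq_UNIV[OF vec.subspace_span] vec.dim_span by metis
  then have "\<forall>v. \<exists>k. v - k *s u \<in> fixed_vectors t"
    using vec.span_breakdown_eq[of _ u "fixed_vectors t"] span_fix by auto
  then have "\<forall>v. \<exists>k. t *v v - v = k *s (t *v u - u)"
    unfolding fixed_vectors_def by (auto simp: vec.diff vec.scale algebra_simps)
  moreover have "t *v u - u \<noteq> 0"
    using u unfolding fixed_vectors_def by simp
  ultimately show ?thesis by blast
qed

definition root :: "'n::finite cmat \<Rightarrow> complex^'n" where
  "root t = (SOME a. a \<noteq> 0 \<and> (\<forall>v. \<exists>c. t *v v - v = c *s a))"

lemma reflection_moves_along_root: "is_reflection t \<Longrightarrow> \<exists>c. t *v v - v = c *s root t"
  unfolding root_def by (rule someI2_ex[OF reflection_root_exists]) auto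

lemma gen_moves_within_roots:
  assumes "\<And>s. s \<in> S \<Longrightarrow> is_reflection s" "p \<in> gen S"
  shows "p *v v - v \<in> vec.span (root ` S)"
  using assms(2)
proof (induction arbitrary: v)
  case gen_one
  show ?case by (simp add: vec.span_zero)
next
  case (gen_elt s)
  then show ?case
    using assms(1) reflection_moves_along_root
    by (metis image_eqI vec.span_base vec.span_scale)
next
  case (gen_inv s)
  have s: "is_reflection s" using assms(1) gen_inv by blast
  then have "invertible s" by (simp add: is_reflection_def)
  then have "s *v (matrix_inv s *v v) = v"
    by (simp add: matrix_vector_mul_assoc matrix_inv_right)
  moreover obtain c where "s *v (matrix_inv s *v v) - matrix_inv s *v v = c *s root s"
    using reflection_moves_along_root[OF s] by blast
  ultimately have "matrix_inv s *v v - v = (- c) *s root s"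
    by (simp add: algebra_simps)
  then show ?case
    using gen_inv by (metis image_eqI vec.span_base vec.span_scale)
next
  case (gen_mult a b)
  have "(a ** b) *v v - v = (a *v (b *v v) - b *v v) + (b *v v - v)"
    by (simp add: matrix_vector_mul_assoc)
  then show ?case using gen_mult.IH vec.span_add by metis
qed

section \<open>Averaging\<close>

lemma group_sum_in_fixspace:
  fixes G :: "'n::finite cmat set"
  assumes "finite G" "\<And>a b. a \<in> G \<Longrightarrow> b \<in> G \<Longrightarrow> a ** b \<in> G" "\<And>a. a \<in> G \<Longrightarrow> invertible a"
  shows "(\<Sum>p\<in>G. p *v v) \<in> fixspace G"
  unfolding fixspace_def
proof (intro CollectI ballI)
  fix h assume h: "h \<in> G"
  have inj: "inj_on ((**) h) G"
    by (rule inj_onI) (metis assms(3)[OF h] matrix_inv_left matrix_mul_assoc matrix_mul_lid)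
  have "(**) h ` G = G"
    using assms(1,2) h card_image[OF inj] by (intro card_subset_eq) auto
  then have "(\<Sum>p\<in>G. (h ** p) *v v) = (\<Sum>p\<in>G. p *v v)"
    using sum.reindex[OF inj, of "\<lambda>q. q *v v"] by simp
  then show "h *v (\<Sum>p\<in>G. p *v v) = (\<Sum>p\<in>G. p *v v)"
    by (simp add: vec.sum matrix_vector_mul_assoc)
qed

text \<open>The average of p v over p \<in> G lies in V^G and differs from v by an element of
  span R, so V = V^G + span R.\<close>

lemma codim_fixspace_le_dim:
  fixes G :: "'n::finite cmat set" and R :: "(complex^'n) set"
  assumes fin: "finite G" and ne: "G \<noteq> {}"
    and mult: "\<And>a b. a \<in> G \<Longrightarrow> b \<in> G \<Longrightarrow> a ** b \<in> G"
    and inv: "\<And>a. a \<in> G \<Longrightarrow> invertible a"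
    and moves: "\<And>p v. p \<in> G \<Longrightarrow> p *v v - v \<in> vec.span R"
  shows "CARD('n) \<le> vec.dim (fixspace G) + vec.dim R"
proof -
  define c :: complex where "c = of_nat (card G)"
  have "c \<noteq> 0" using fin ne by (simp add: c_def)
  define avg where "avg v = inverse c *s (\<Sum>p\<in>G. p *v v)" for v
  have avg_fixed: "avg v \<in> fixspace G" for v
    unfolding avg_def
    by (rule vec.subspace_scale[OF subspace_fixspace group_sum_in_fixspace[OF fin mult inv]])
  have "(\<Sum>p\<in>G. p *v v - v) = (\<Sum>p\<in>G. p *v v) - c *s v" for v
    by (simp add: sum_subtractf vec_eq_iff sum_component of_nat_index c_def)
  moreover have "v = inverse c *s (c *s v)" for v
    using \<open>c \<noteq> 0\<close> by simp
  ultimately have "avg v - v = inverse c *s (\<Sum>p\<in>G. p *v v - v)" for v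
    unfolding avg_def by (metis vec.scale_right_diff_distrib)
  moreover have "(\<Sum>p\<in>G. p *v v - v) \<in> vec.span R" for v
    using moves by (intro vec.span_sum) blast
  ultimately have avg_moves: "v - avg v \<in> vec.span R" for v
    by (metis minus_diff_eq vec.span_neg vec.span_scale)
  have "UNIV \<subseteq> {x + y |x y. x \<in> fixspace G \<and> y \<in> vec.span R}"
  proof
    fix v :: "complex^'n"
    have "v = avg v + (v - avg v)" by simp
    then show "v \<in> {x + y |x y. x \<in> fixspace G \<and> y \<in> vec.span R}"
      using avg_fixed avg_moves by blast
  qed
  then have "vec.dim (UNIV :: (complex^'n) set)
      \<le> vec.dim {x + y |x y. x \<in> fixspace G \<and> y \<in> vec.span R}"
    by (rule vec.dim_subset)
  also have "\<dots> \<le> vec.dim (fixspace G) + vec.dim R"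
    using vec.dim_sums_Int[OF subspace_fixspace vec.subspace_span, of G R] by simp
  finally show ?thesis by (simp only: vec_dim_card)
qed

lemma grank_gen_le_dim_roots:
  fixes W :: "'n::finite cmat set"
  assumes W: "reflection_group W" and S: "S \<subseteq> refls W"
  shows "grank (gen S) \<le> vec.dim (root ` S)"
proof -
  have SW: "S \<subseteq> W" using S by (auto simp: refls_def)
  have inv: "\<And>s. s \<in> S \<Longrightarrow> invertible s" using SW W by (auto simp: reflection_group_def)
  have "CARD('n) \<le> vec.dim (fixspace (gen S)) + vec.dim (root ` S)"
  proof (rule codim_fixspace_le_dim)
    show "finite (gen S)"
      using reflection_group_gen_subset[OF W SW] W finite_subset
      unfolding reflection_group_def by blast
    show "gen S \<noteq> {}" using gen.gen_one by blast
    show "a ** b \<in> gen S" if "a \<in> gen S" "b \<in> gen S" for a b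
      using that by (rule gen.gen_mult)
    show "invertible a" if "a \<in> gen S" for a
      using gen_invertible_inv[OF inv that] by blast
    show "p *v v - v \<in> vec.span (root ` S)" if "p \<in> gen S" for p v
      using S that by (intro gen_moves_within_roots) (auto simp: refls_def)
  qed
  then show ?thesis by (simp add: grank_def)
qed

section \<open>Reduced reflection factorizations\<close>

lemma reflection_group_finite_order:
  assumes W: "reflection_group W" and w: "w \<in> W"
  shows "\<exists>k>0. ((**) w ^^ k) (mat 1) = mat 1"
proof -
  define pow where "pow k = ((**) w ^^ k) (mat 1)" for k
  have pow_add: "pow (i + j) = pow i ** pow j" for i j
    by (induction i) (simp_all add: pow_def matrix_mul_assoc)
  have pow_in: "pow k \<in> W" for k
  proof (induction k)
    case 0
    show ?case using reflection_group_one[OF W] by (simp add: pow_def)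
  next
    case (Suc k)
    then show ?case using reflection_group_mult[OF W w] by (simp add: pow_def)
  qed
  have "finite W" using W by (simp add: reflection_group_def)
  then have "finite (range pow)"
    using pow_in by (meson finite_subset image_subset_iff)
  then have "\<not> inj pow"
    using finite_imageD infinite_UNIV_nat by blast
  then obtain i j where "i < j" "pow i = pow j"
    unfolding inj_def by (metis linorder_neqE_nat)
  then have "pow i ** pow (j - i) = pow i ** mat 1"
    using pow_add[of i "j - i"] by simp
  then have "(matrix_inv (pow i) ** pow i) ** pow (j - i) = (matrix_inv (pow i) ** pow i) ** mat 1"
    by (metis matrix_mul_assoc)
  moreover have "invertible (pow i)" using W pow_in[of i] by (simp add: reflection_group_def)
  ultimately have "pow (j - i) = mat 1"
    by (simp add: matrix_inv_left)
  then show ?thesis using \<open>i < j\<close> unfolding pow_def by (intro exI[of _ "j - i"]) simp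
qed

lemma refls_memberI:
  fixes W :: "'n::finite cmat set"
  assumes W: "reflection_group W" and w: "w \<in> W" "w \<noteq> mat 1"
    and dim: "vec.dim (fixed_vectors w) = CARD('n) - 1"
  shows "w \<in> refls W"
proof -
  have "invertible w" using W w by (simp add: reflection_group_def)
  then show ?thesis
    using w dim reflection_group_finite_order[OF W w(1)]
    by (simp add: refls_def is_reflection_def fixed_vectors_def)
qed

lemma fixed_vectors_conj:
  fixes t r :: "'n::finite cmat"
  assumes t: "invertible t"
  shows "fixed_vectors (t ** r ** matrix_inv t) = (*v) t ` fixed_vectors r"
proof (intro set_eqI iffI)
  fix x assume x: "x \<in> fixed_vectors (t ** r ** matrix_inv t)"
  have "r *v (matrix_inv t *v x) = matrix_inv t *v ((t ** r ** matrix_inv t) *v x)"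
    using matrix_inv_left[OF t] by (simp add: matrix_vector_mul_assoc matrix_mul_assoc)
  then have "matrix_inv t *v x \<in> fixed_vectors r"
    using x by (simp add: fixed_vectors_def)
  moreover have "x = t *v (matrix_inv t *v x)"
    using matrix_inv_right[OF t] by (simp add: matrix_vector_mul_assoc)
  ultimately show "x \<in> (*v) t ` fixed_vectors r" by blast
next
  fix x assume "x \<in> (*v) t ` fixed_vectors r"
  then obtain y where y: "r *v y = y" "x = t *v y" unfolding fixed_vectors_def by blast
  have "(t ** r ** matrix_inv t) *v x = t *v (r *v ((matrix_inv t ** t) *v y))"
    using y by (simp add: matrix_vector_mul_assoc matrix_mul_assoc)
  then show "x \<in> fixed_vectors (t ** r ** matrix_inv t)"
    using matrix_inv_left[OF t] y by (simp add: fixed_vectors_def)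
qed

lemma conj_in_refls:
  fixes W :: "'n::finite cmat set"
  assumes W: "reflection_group W" and t: "t \<in> W" and r: "r \<in> refls W"
  shows "t ** r ** matrix_inv t \<in> refls W"
proof (rule refls_memberI[OF W])
  have rW: "r \<in> W" and rr: "is_reflection r" using r by (auto simp: refls_def)
  have ti: "invertible t" using W t by (simp add: reflection_group_def)
  show "t ** r ** matrix_inv t \<in> W"
    using reflection_group_mult[OF W] reflection_group_matrix_inv[OF W] t rW by blast
  show "t ** r ** matrix_inv t \<noteq> mat 1"
  proof
    assume one: "t ** r ** matrix_inv t = mat 1"
    have "r = matrix_inv t ** (t ** r ** matrix_inv t) ** t"
      using matrix_inv_left[OF ti] by (metis matrix_mul_assoc matrix_mul_lid matrix_mul_rid)
    then have "r = mat 1"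
      using matrix_inv_left[OF ti] by (simp add: one)
    then show False using rr by (simp add: is_reflection_def)
  qed
  have "vec.dim (fixed_vectors (t ** r ** matrix_inv t)) = vec.dim (fixed_vectors r)"
    unfolding fixed_vectors_conj[OF ti] using inj_matrix_vector_mult[OF ti]
    by (intro vec.dim_image_eq) (auto simp: inj_on_def)
  then show "vec.dim (fixed_vectors (t ** r ** matrix_inv t)) = CARD('n) - 1"
    using rr by (simp add: is_reflection_def fixed_vectors_def)
qed

lemma square_in_refls:
  fixes W :: "'n::finite cmat set"
  assumes W: "reflection_group W" and r: "r \<in> refls W" and ne: "r ** r \<noteq> mat 1"
  shows "r ** r \<in> refls W"
proof (rule refls_memberI[OF W _ ne])
  have rW: "r \<in> W" and rr: "is_reflection r" using r by (auto simp: refls_def)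
  show "r ** r \<in> W" using reflection_group_mult[OF W rW rW] .
  have "fixed_vectors r \<subseteq> fixed_vectors (r ** r)"
    by (auto simp: fixed_vectors_def simp flip: matrix_vector_mul_assoc)
  then have "vec.dim (fixed_vectors r) \<le> vec.dim (fixed_vectors (r ** r))"
    by (rule vec.dim_subset)
  moreover have "vec.dim (fixed_vectors r) = CARD('n) - 1"
    using rr by (simp add: is_reflection_def fixed_vectors_def)
  moreover have "vec.dim (fixed_vectors (r ** r)) \<noteq> CARD('n)"
    using full_dim_subspace_eq_UNIV[OF subspace_fixed_vectors] fixed_vectors_eq_UNIV_iff ne
    by blast
  ultimately show "vec.dim (fixed_vectors (r ** r)) = CARD('n) - 1"
    using dim_subset_UNIV_cart_gen[of "fixed_vectors (r ** r)"] by linarith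
qed

lemma mprod_map_conj:
  fixes t :: "'n::finite cmat"
  assumes t: "invertible t"
  shows "mprod (map (\<lambda>y. t ** y ** matrix_inv t) ys) = t ** mprod ys ** matrix_inv t"
proof (induction ys)
  case Nil
  show ?case using matrix_inv_right[OF t] by simp
next
  case (Cons y ys)
  have "(t ** y ** matrix_inv t) ** (t ** mprod ys ** matrix_inv t)
      = t ** y ** (matrix_inv t ** t) ** mprod ys ** matrix_inv t"
    by (simp add: matrix_mul_assoc)
  then show ?case using Cons matrix_inv_left[OF t] by (simp add: matrix_mul_assoc)
qed

lemma refl_length_le: "set ts \<subseteq> refls W \<Longrightarrow> mprod ts = g \<Longrightarrow> refl_length W g \<le> length ts"
  unfolding refl_length_def by (rule Least_le) blast

text \<open>Two occurrences of a reflection t in a factorization can be removed by conjugating the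
  factors between them by t, at the cost of inserting t ** t, which is again a reflection or
  trivial; so a reduced factorization has no repeated factor.\<close>

lemma reduced_refl_fact_distinct:
  assumes W: "reflection_group W" and red: "reduced_refl_fact W g ts"
  shows "distinct ts"
proof (rule ccontr)
  assume "\<not> distinct ts"
  then obtain xs t ys zs where ts: "ts = xs @ [t] @ ys @ [t] @ zs"
    using not_distinct_decomp by blast
  have refl: "set ts \<subseteq> refls W" and g: "mprod ts = g" and len: "length ts = refl_length W g"
    using red by (auto simp: reduced_refl_fact_def)
  have tR: "t \<in> refls W" using refl ts by auto
  then have tW: "t \<in> W" by (simp add: refls_def)
  then have ti: "invertible t" using W by (simp add: reflection_group_def)
  define sq where "sq = (if t ** t = mat 1 then [] else [t ** t])"
  define ts' where "ts' = xs @ map (\<lambda>y. t ** y ** matrix_inv t) ys @ sq @ zs"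
  have "set sq \<subseteq> refls W"
    using square_in_refls[OF W tR] by (simp add: sq_def)
  moreover have "set (map (\<lambda>y. t ** y ** matrix_inv t) ys) \<subseteq> refls W"
    using conj_in_refls[OF W tW] refl ts by auto
  ultimately have refl': "set ts' \<subseteq> refls W"
    using refl ts by (auto simp: ts'_def)
  have "mprod sq = t ** t" by (simp add: sq_def)
  then have "mprod ts' = mprod xs ** (t ** mprod ys ** (matrix_inv t ** t) ** t ** mprod zs)"
    by (simp add: ts'_def mprod_map_conj[OF ti] matrix_mul_assoc)
  also have "\<dots> = g"
    using g matrix_inv_left[OF ti] by (simp add: ts matrix_mul_assoc)
  finally have "refl_length W g \<le> length ts'"
    using refl_length_le[OF refl'] by blast
  moreover have "length ts' < length ts"
    by (simp add: ts ts'_def sq_def)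
  ultimately show False using len by simp
qed

lemma grank_gen_le_card:
  assumes W: "reflection_group W" and S: "S \<subseteq> refls W" "finite S"
  shows "grank (gen S) \<le> card S"
proof -
  have "vec.dim (root ` S) \<le> card (root ` S)"
    using S(2) by (intro vec.dim_le_card) (auto intro: vec.span_base)
  then show ?thesis
    using grank_gen_le_dim_roots[OF W S(1)] card_image_le[OF S(2), of root] by linarith
qed

lemma roots_independent_if_card_le_grank:
  assumes W: "reflection_group W" and S: "S \<subseteq> refls W" "finite S"
    and card: "card S \<le> grank (gen S)"
  shows "vec.independent (root ` S)" "inj_on root S"
proof -
  have dim: "vec.dim (root ` S) \<le> card (root ` S)"
    using S(2) by (intro vec.dim_le_card) (auto intro: vec.span_base)
  have "card S \<le> vec.dim (root ` S)"
    using card grank_gen_le_dim_roots[OF W S(1)] by linarith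
  moreover have "card (root ` S) \<le> card S"
    using card_image_le[OF S(2)] .
  ultimately have "card (root ` S) = card S" "card (root ` S) \<le> vec.dim (root ` S)"
    using dim by linarith+
  then show "inj_on root S" "vec.independent (root ` S)"
    using S(2) eq_card_imp_inj_on vec.card_le_dim_spanning[of "root ` S" "root ` S"]
    by (auto intro: vec.span_base)
qed

lemma fixspace_subset_fixed_vectors_mprod:
  assumes "\<And>t. t \<in> set ts \<Longrightarrow> invertible t"
  shows "fixspace (set ts) \<subseteq> fixed_vectors (mprod ts)"
  using fixspace_gen[of "set ts"] assms mprod_in_gen[of ts "set ts"]
  by (auto simp: fixspace_def fixed_vectors_def)

text \<open>Carter's lemma. Peeling off the first factor t, the displacement of v under the remaining
  product lies in the span of their roots, which does not contain the root of t.\<close>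

lemma fixed_vectors_mprod_independent_roots:
  assumes refl: "\<And>t. t \<in> set ts \<Longrightarrow> is_reflection t"
    and dist: "distinct (map root ts)" and indep: "vec.independent (root ` set ts)"
  shows "fixed_vectors (mprod ts) = fixspace (set ts)"
proof
  show "fixspace (set ts) \<subseteq> fixed_vectors (mprod ts)"
    using refl by (intro fixspace_subset_fixed_vectors_mprod) (simp add: is_reflection_def)
  show "fixed_vectors (mprod ts) \<subseteq> fixspace (set ts)"
    using assms
  proof (induction ts)
    case Nil
    show ?case by (simp add: fixspace_def)
  next
    case (Cons t ts)
    show ?case
    proof
      fix v assume "v \<in> fixed_vectors (mprod (t # ts))"
      then have tw: "t *v w = v" if "w = mprod ts *v v" for w
        using that by (simp add: fixed_vectors_def matrix_vector_mul_assoc)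
      define w where "w = mprod ts *v v"
      have t: "is_reflection t" using Cons.prems(1) by simp
      obtain c where c: "t *v w - w = c *s root t"
        using reflection_moves_along_root[OF t] by blast
      have "w - v \<in> vec.span (root ` set ts)"
        unfolding w_def using Cons.prems(1) mprod_in_gen[of ts "set ts"]
        by (intro gen_moves_within_roots) auto
      moreover have "c *s root t = - (w - v)" using c tw[OF w_def] by simp
      ultimately have "c *s root t \<in> vec.span (root ` set ts)"
        by (metis vec.span_neg)
      moreover have "root t \<notin> vec.span (root ` set ts)"
      proof -
        have "root t \<notin> root ` set ts" using Cons.prems(2) by auto
        then show ?thesis using Cons.prems(3) vec.independent_insert[of "root t" "root ` set ts"] by simp
      qed
      ultimately have "c = 0"
        using vec.span_scale[of "c *s root t" _ "inverse c"] by (cases "c = 0") auto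
      then have "w = v" using c tw[OF w_def] by simp
      then have "v \<in> fixspace (set ts)"
        using Cons.IH Cons.prems vec.independent_mono[OF Cons.prems(3)]
        by (auto simp: w_def fixed_vectors_def)
      moreover have "t *v v = v" using tw[OF w_def] \<open>w = v\<close> by simp
      ultimately show "v \<in> fixspace (set (t # ts))" by (simp add: fixspace_def)
    qed
  qed
qed

section \<open>Parabolic quasi-Coxeter elements\<close>

lemma pclosure_eq_pstab_fixed_vectors:
  assumes "g \<in> W"
  shows "pclosure W g = pstab W (fixed_vectors g)"
proof
  have "parabolic W (pstab W (fixed_vectors g))" by (auto simp: parabolic_def)
  moreover have "g \<in> pstab W (fixed_vectors g)"
    using assms by (simp add: pstab_def fixed_vectors_def)
  ultimately show "pclosure W g \<subseteq> pstab W (fixed_vectors g)"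
    unfolding pclosure_def by blast
  show "pstab W (fixed_vectors g) \<subseteq> pclosure W g"
    by (auto simp: pclosure_def parabolic_def pstab_def fixed_vectors_def)
qed

lemma reduced_good_factorization:
  fixes W :: "'n::finite cmat set"
  assumes W: "reflection_group W" and red: "reduced_refl_fact W g ts"
    and good: "good_gen_set (set ts) P"
  shows "fixed_vectors g = fixspace P" and "grank P = refl_length W g"
proof -
  have refl: "set ts \<subseteq> refls W" and g: "mprod ts = g" and len: "length ts = refl_length W g"
    using red by (auto simp: reduced_refl_fact_def)
  have P: "P = gen (set ts)" and card: "card (set ts) = grank P"
    using good by (auto simp: good_gen_set_def)
  have "distinct ts" using reduced_refl_fact_distinct[OF W red] .
  then show "grank P = refl_length W g"
    using card len distinct_card by fastforce
  have "vec.independent (root ` set ts)" "inj_on root (set ts)"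
    using roots_independent_if_card_le_grank[OF W refl] card P by simp_all
  moreover have "\<And>t. t \<in> set ts \<Longrightarrow> is_reflection t"
    using refl by (auto simp: refls_def)
  ultimately have "fixed_vectors g = fixspace (set ts)"
    using fixed_vectors_mprod_independent_roots[of ts] \<open>distinct ts\<close> g by (simp add: distinct_map)
  also have "\<dots> = fixspace P"
    unfolding P using refl by (intro fixspace_gen[symmetric]) (auto simp: refls_def is_reflection_def)
  finally show "fixed_vectors g = fixspace P" .
qed

text \<open>A factorization into at most codim V^g reflections generates a group whose fixed space,
  which contains V^g, has codimension at most codim V^g; so the two fixed spaces agree.\<close>

lemma short_refl_fact_subset_pstab:
  fixes W :: "'n::finite cmat set"
  assumes W: "reflection_group W" and refl: "set ts \<subseteq> refls W"
    and len: "length ts \<le> CARD('n) - vec.dim (fixed_vectors (mprod ts))"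
  shows "set ts \<subseteq> pstab W (fixed_vectors (mprod ts))"
proof -
  let ?F = "fixspace (gen (set ts))"
  have "grank (gen (set ts)) \<le> length ts"
    using grank_gen_le_card[OF W refl] card_length[of ts] by simp
  then have "vec.dim (fixed_vectors (mprod ts)) \<le> vec.dim ?F"
    using len dim_subset_UNIV_cart_gen[of ?F] dim_subset_UNIV_cart_gen[of "fixed_vectors (mprod ts)"]
    unfolding grank_def by linarith
  moreover have "?F \<subseteq> fixed_vectors (mprod ts)"
    using mprod_in_gen[of ts "set ts"] by (auto simp: fixspace_def fixed_vectors_def)
  ultimately have "?F = fixed_vectors (mprod ts)"
    using vec.subspace_dim_equal subspace_fixspace subspace_fixed_vectors by blast
  then show ?thesis
    using refl gen.gen_elt[of _ "set ts"]
    by (auto simp: pstab_def refls_def fixspace_def)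
qed

lemma reflection_group_gen_eqI:
  assumes W: "reflection_group W" and "A \<subseteq> W" "B \<subseteq> gen A" "gen B = W"
  shows "gen A = W"
proof
  show "gen A \<subseteq> W" using reflection_group_gen_subset[OF W assms(2)] .
  have "\<And>s. s \<in> A \<Longrightarrow> invertible s"
    using W assms(2) by (auto simp: reflection_group_def)
  then show "W \<subseteq> gen A" using gen_subset_gen assms(3,4) by blast
qed

lemma RGS_elt_eq_RGS_sub:
  assumes W: "reflection_group W" and red: "reduced_refl_fact W g ts"
    and P: "P = gen (set ts)" "grank P = refl_length W g"
    and contains: "\<And>ts'. reduced_refl_fact W g ts' \<Longrightarrow> set ts' \<subseteq> P"
  shows "RGS_elt W g = RGS_sub W P"
proof (intro set_eqI iffI)
  have tsW: "set ts \<subseteq> W" using red by (auto simp: reduced_refl_fact_def refls_def)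
  then have PW: "P \<subseteq> W" using reflection_group_gen_subset[OF W] P(1) by blast
  {
    fix T assume "T \<in> RGS_elt W g"
    then obtain ts' where T: "finite T" "card T = grank W - refl_length W g" "T \<subseteq> refls W"
      and red': "reduced_refl_fact W g ts'" and gen': "gen (T \<union> set ts') = W"
      by (auto simp: RGS_elt_def)
    have "T \<union> set ts' \<subseteq> gen (P \<union> T)"
      using contains[OF red'] gen.gen_elt[of _ "P \<union> T"] by blast
    moreover have "P \<union> T \<subseteq> W" using T(3) PW by (auto simp: refls_def)
    ultimately have "gen (P \<union> T) = W"
      using reflection_group_gen_eqI[OF W _ _ gen'] by blast
    then show "T \<in> RGS_sub W P" using T P(2) by (simp add: RGS_sub_def)
  next
    fix T assume "T \<in> RGS_sub W P"
    then have T: "finite T" "card T = grank W - grank P" "T \<subseteq> refls W"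
      and gen': "gen (P \<union> T) = W"
      by (auto simp: RGS_sub_def)
    have TW: "T \<subseteq> W" using T(3) by (auto simp: refls_def)
    have "P \<subseteq> gen (T \<union> set ts)"
      unfolding P(1) using TW tsW W by (intro gen_mono) (auto simp: reflection_group_def)
    then have "P \<union> T \<subseteq> gen (T \<union> set ts)"
      using gen.gen_elt[of _ "T \<union> set ts"] by blast
    moreover have "T \<union> set ts \<subseteq> W" using TW tsW by blast
    ultimately have "gen (T \<union> set ts) = W"
      using reflection_group_gen_eqI[OF W _ _ gen'] by blast
    then show "T \<in> RGS_elt W g" using T red P(2) by (auto simp: RGS_elt_def)
  }
qed

lemma pclosure_eq_parabolic:
  assumes "parabolic W P" "g \<in> P" "fixspace P = fixed_vectors g"
  shows "pclosure W g = P"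
proof
  show "pclosure W g \<subseteq> P" using assms(1,2) by (auto simp: pclosure_def)
  have "P \<subseteq> W" using assms(1) by (auto simp: parabolic_def pstab_def)
  moreover have "g \<in> W" using calculation assms(2) by blast
  ultimately show "P \<subseteq> pclosure W g"
    using assms(3) pclosure_eq_pstab_fixed_vectors[of g W]
    by (auto simp: pstab_def fixspace_def)
qed

lemma reduced_refl_fact_subset_pclosure:
  fixes W :: "'n::finite cmat set"
  assumes W: "reflection_group W" and "g \<in> W" and red: "reduced_refl_fact W g ts"
    and len: "refl_length W g \<le> CARD('n) - vec.dim (fixed_vectors g)"
  shows "set ts \<subseteq> pclosure W g"
proof -
  have "set ts \<subseteq> refls W" "mprod ts = g" "length ts = refl_length W g"
    using red by (auto simp: reduced_refl_fact_def)
  then show ?thesis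
    using short_refl_fact_subset_pstab[OF W, of ts] len pclosure_eq_pstab_fixed_vectors[OF \<open>g \<in> W\<close>]
    by simp
qed

theorem mainTheorem11:
  fixes W :: "'n::finite cmat set" and g :: "'n cmat"
  assumes "well_generated W"
    and "g \<in> W"
    and "parabolic_quasi_coxeter W g"
  shows "RGS_elt W g = RGS_sub W (pclosure W g)"
proof -
  have W: "reflection_group W" using assms(1) by (simp add: well_generated_def)
  obtain ts P where red: "reduced_refl_fact W g ts" and par: "parabolic W P"
    and good: "good_gen_set (set ts) P"
    using assms(3) unfolding parabolic_quasi_coxeter_def by blast
  have fixed: "fixed_vectors g = fixspace P" and rank: "grank P = refl_length W g"
    using reduced_good_factorization[OF W red good] by simp_all
  have P: "P = gen (set ts)" using good by (simp add: good_gen_set_def)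
  have "g \<in> P" using red mprod_in_gen P by (auto simp: reduced_refl_fact_def)
  then have "pclosure W g = P" using pclosure_eq_parabolic[OF par _ fixed[symmetric]] by blast
  moreover have "set ts' \<subseteq> pclosure W g" if "reduced_refl_fact W g ts'" for ts'
    using reduced_refl_fact_subset_pclosure[OF W assms(2) that] fixed rank by (simp add: grank_def)
  ultimately show ?thesis using RGS_elt_eq_RGS_sub[OF W red P rank] by simp
qed

end
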